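(* Let $\ell_n>0$, $\sigma_{n,0}>0$, $\kappa_n\in\mathbb R$, $\sigma_{n,\pm1}\ge0$ for $n\in\mathbb N$, let $\sigma_n=\max(\sigma_{n,-1},\sigma_{n,1})$, and let $(x_n)_{n\in\mathbb N}$ be a positive solution with given $x_0\in\mathbb R$. Then: (i) for every $n\ge2$, $x_n\le \dfrac{\sqrt{\kappa_n^2+4\ell_n\sigma_{n,0}}-\kappa_n}{2\sigma_{n,0}}\le \sqrt{\ell_n/\sigma_{n,0}}+\kappa_n^-/\sigma_{n,0}$; (ii) if $n\ge2$ satisfies $\sigma_n\le\sigma_{n,0}<2\sigma_n$ and $-2(\sigma_{n,0}-\sigma_n)\sqrt{\ell_n}\le\kappa_n\sqrt{2\sigma_n-\sigma_{n,0}}$, then $x_n\le\sqrt{\ell_n}/\sqrt{2\sigma_n-\sigma_{n,0}}$; the same bound holds for $n=1$ if $\sigma_1\le\sigma_{1,0}<2\sigma_1$ and $-2(\sigma_{1,0}-\sigma_1)\sqrt{\ell_1}\le(\sigma_{1,-1}x_0+\kappa_1)\sqrt{2\sigma_1-\sigma_{1,0}}$.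
   Context: $\mathbb N=\{1,2,3,\dots\}$; $a^-=(|a|-a)/2$. A positive solution with given $x_0\in\mathbb R$ is a sequence $(x_n)_{n\in\mathbb N}$ of positive reals satisfying $\ell_n = x_n(\sigma_{n,1}x_{n+1}+\sigma_{n,0}x_n+\sigma_{n,-1}x_{n-1})+\kappa_n x_n$ for all $n\in\mathbb N$. *)

theory Defs
  imports Complex_Main
begin

definition negpart :: "real \<Rightarrow> real" where
  "negpart a = (\<bar>a\<bar> - a) / 2"

text \<open>Positive solution with given x 0: indices n \<in> \<nat> = {1,2,...} are the n \<ge> 1;
  sp = sigma_{n,1}, s0 = sigma_{n,0}, sm = sigma_{n,-1}.\<close>
definition positive_solution ::
  "(nat \<Rightarrow> real) \<Rightarrow> (nat \<Rightarrow> real) \<Rightarrow> (nat \<Rightarrow> real) \<Rightarrow> (nat \<Rightarrow> real) \<Rightarrow> (nat \<Rightarrow> real)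
   \<Rightarrow> (nat \<Rightarrow> real) \<Rightarrow> bool" where
  "positive_solution l sp s0 sm k x \<longleftrightarrow>
     (\<forall>n\<ge>1. x n > 0) \<and>
     (\<forall>n\<ge>1. l n = x n * (sp n * x (Suc n) + s0 n * x n + sm n * x (n - 1)) + k n * x n)"

end

theory Submission
  imports Defs
begin

text \<open>Dropping the nonnegative neighbour terms from the equation at n leaves the quadratic
  inequality \<open>\<sigma>\<^sub>n\<^sub>,\<^sub>0 x\<^sub>n\<^sup>2 + K x\<^sub>n \<le> \<ell>\<^sub>n\<close>, with \<open>K = \<kappa>\<^sub>n\<close> for \<open>n \<ge> 2\<close> and
  \<open>K = \<sigma>\<^sub>1\<^sub>,\<^sub>-\<^sub>1 x\<^sub>0 + \<kappa>\<^sub>1\<close> for \<open>n = 1\<close> (where \<open>x\<^sub>0\<close> need not be positive).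
  Such an inequality confines \<open>x\<^sub>n\<close> below the positive root of the quadratic, which gives (i);
  for (ii) the hypothesis says exactly that the quadratic is at least \<open>\<ell>\<^sub>n\<close> at the point
  \<open>\<surd>\<ell>\<^sub>n / \<surd>(2\<sigma>\<^sub>n - \<sigma>\<^sub>n\<^sub>,\<^sub>0)\<close>, and the quadratic is increasing beyond any positive point
  where it is positive.\<close>

lemma le_positive_root_of_quadratic_le:
  fixes a K l x :: real
  assumes "a > 0" "a * x\<^sup>2 + K * x \<le> l"
  shows "x \<le> (sqrt (K\<^sup>2 + 4 * l * a) - K) / (2 * a)"
proof -
  have "(2 * a * x + K)\<^sup>2 = 4 * a * (a * x\<^sup>2 + K * x) + K\<^sup>2"
    by (simp add: power2_eq_square algebra_simps)
  also have "\<dots> \<le> 4 * a * l + K\<^sup>2"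
    using assms by simp
  also have "\<dots> = K\<^sup>2 + 4 * l * a"
    by simp
  finally have "\<bar>2 * a * x + K\<bar> \<le> sqrt (K\<^sup>2 + 4 * l * a)"
    using real_sqrt_le_mono by fastforce
  then show ?thesis
    using assms(1) by (simp add: field_simps)
qed

lemma positive_root_le_sqrt_add_negpart:
  fixes a K l :: real
  assumes "a > 0" "l > 0"
  shows "(sqrt (K\<^sup>2 + 4 * l * a) - K) / (2 * a) \<le> sqrt (l / a) + negpart K / a"
proof -
  have "(sqrt (l * a))\<^sup>2 = l * a"
    using assms by simp
  then have "K\<^sup>2 + 4 * l * a \<le> (\<bar>K\<bar> + 2 * sqrt (l * a))\<^sup>2"
    by (simp add: power2_eq_square algebra_simps)
  then have "sqrt (K\<^sup>2 + 4 * l * a) \<le> sqrt ((\<bar>K\<bar> + 2 * sqrt (l * a))\<^sup>2)"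
    by (rule real_sqrt_le_mono)
  also have "\<dots> = \<bar>K\<bar> + 2 * sqrt (l * a)"
    using assms by (simp add: abs_of_nonneg)
  finally have "(sqrt (K\<^sup>2 + 4 * l * a) - K) / (2 * a) \<le> (\<bar>K\<bar> - K + 2 * sqrt (l * a)) / (2 * a)"
    using assms(1) by (intro divide_right_mono) auto
  also have "\<dots> = sqrt (l * a) / a + negpart K / a"
    using assms(1) by (simp add: negpart_def add_divide_distrib)
  also have "sqrt (l * a) / a = sqrt (l / a)"
    using assms by (simp add: real_sqrt_divide real_sqrt_mult field_simps)
  finally show ?thesis .
qed

lemma le_of_quadratic_le_quadratic:
  fixes a K x y :: real
  assumes "a \<ge> 0" "y > 0" "a * y\<^sup>2 + K * y > 0"
    and "a * x\<^sup>2 + K * x \<le> a * y\<^sup>2 + K * y"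
  shows "x \<le> y"
proof (rule ccontr)
  assume "\<not> x \<le> y"
  have "y * (a * y + K) > 0"
    using assms(3) by (simp add: power2_eq_square algebra_simps)
  then have "a * y + K > 0"
    using assms(2) zero_less_mult_pos by blast
  moreover have "a * x \<ge> 0"
    using assms(1,2) \<open>\<not> x \<le> y\<close> by simp
  ultimately have "a * (x + y) + K > 0"
    by (simp add: distrib_left)
  then have "(x - y) * (a * (x + y) + K) > 0"
    using \<open>\<not> x \<le> y\<close> by simp
  moreover have "(a * x\<^sup>2 + K * x) - (a * y\<^sup>2 + K * y) = (x - y) * (a * (x + y) + K)"
    by (simp add: power2_eq_square algebra_simps)
  ultimately show False
    using assms(4) by linarith
qed

lemma le_div_of_quadratic_le:
  fixes a K m r x :: real
  assumes "a \<ge> 0" "m > 0" "r > 0" "a * x\<^sup>2 + K * x \<le> m\<^sup>2"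
    and "(r\<^sup>2 - a) * m \<le> K * r"
  shows "x \<le> m / r"
proof (rule le_of_quadratic_le_quadratic[OF assms(1)])
  have "r\<^sup>2 * m\<^sup>2 \<le> a * m\<^sup>2 + K * r * m"
    using mult_right_mono[OF assms(5) less_imp_le[OF assms(2)]]
    by (simp add: power2_eq_square algebra_simps)
  also have "\<dots> = r\<^sup>2 * (a * (m / r)\<^sup>2 + K * (m / r))"
    using assms(3) by (simp add: power2_eq_square field_simps)
  finally have "m\<^sup>2 \<le> a * (m / r)\<^sup>2 + K * (m / r)"
    using assms(3) by simp
  moreover have "m\<^sup>2 > 0"
    using assms(2) by simp
  ultimately show "a * x\<^sup>2 + K * x \<le> a * (m / r)\<^sup>2 + K * (m / r)"
    "0 < a * (m / r)\<^sup>2 + K * (m / r)"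
    using assms(4) by linarith+
qed (use assms in simp)

lemma le_of_quadratic_le_of_coefficient_bound:
  fixes a s K l x :: real
  assumes "a > 0" "l > 0" "a < 2 * s" "a * x\<^sup>2 + K * x \<le> l"
    and "- 2 * (a - s) * sqrt l \<le> K * sqrt (2 * s - a)"
  shows "x \<le> sqrt l / sqrt (2 * s - a)"
proof (rule le_div_of_quadratic_le)
  have "(sqrt (2 * s - a))\<^sup>2 - a = - 2 * (a - s)"
    using assms(3) by simp
  with assms(5) show "((sqrt (2 * s - a))\<^sup>2 - a) * sqrt l \<le> K * sqrt (2 * s - a)"
    by (simp only:)
qed (use assms in simp_all)

lemma positive_solution_quadratic_le:
  assumes "positive_solution l sp s0 sm k x" "n \<ge> 1" "sp n \<ge> 0"
  shows "s0 n * (x n)\<^sup>2 + (sm n * x (n - 1) + k n) * x n \<le> l n"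
proof -
  have pos: "x n > 0" "x (Suc n) > 0"
    and eq: "l n = x n * (sp n * x (Suc n) + s0 n * x n + sm n * x (n - 1)) + k n * x n"
    using assms(1,2) unfolding positive_solution_def by auto
  have "x n * (sp n * x (Suc n)) \<ge> 0"
    using pos assms(3) by simp
  then show ?thesis
    using eq by (simp add: power2_eq_square algebra_simps)
qed

lemma positive_solution_quadratic_le_interior:
  assumes "positive_solution l sp s0 sm k x" "n \<ge> 2" "sp n \<ge> 0" "sm n \<ge> 0"
  shows "s0 n * (x n)\<^sup>2 + k n * x n \<le> l n"
proof -
  have "x n > 0" "x (n - 1) > 0"
    using assms(1,2) unfolding positive_solution_def by auto
  then have "sm n * x (n - 1) * x n \<ge> 0"
    using assms(4) by simp
  then show ?thesis
    using positive_solution_quadratic_le[OF assms(1) _ assms(3)] assms(2)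
    by (simp add: algebra_simps)
qed

theorem mainTheorem6:
  fixes l sp s0 sm k x :: "nat \<Rightarrow> real"
  assumes l_pos: "\<And>n. n \<ge> 1 \<Longrightarrow> l n > 0"
    and s0_pos: "\<And>n. n \<ge> 1 \<Longrightarrow> s0 n > 0"
    and sp_nn: "\<And>n. n \<ge> 1 \<Longrightarrow> sp n \<ge> 0"
    and sm_nn: "\<And>n. n \<ge> 1 \<Longrightarrow> sm n \<ge> 0"
    and sol: "positive_solution l sp s0 sm k x"
  defines "s \<equiv> (\<lambda>n. max (sm n) (sp n))"
  shows "(\<forall>n\<ge>2. x n \<le> (sqrt ((k n)\<^sup>2 + 4 * l n * s0 n) - k n) / (2 * s0 n)
              \<and> (sqrt ((k n)\<^sup>2 + 4 * l n * s0 n) - k n) / (2 * s0 n)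
                   \<le> sqrt (l n / s0 n) + negpart (k n) / s0 n)
       \<and> (\<forall>n\<ge>2. s n \<le> s0 n \<and> s0 n < 2 * s n \<and>
              - 2 * (s0 n - s n) * sqrt (l n) \<le> k n * sqrt (2 * s n - s0 n)
              \<longrightarrow> x n \<le> sqrt (l n) / sqrt (2 * s n - s0 n))
       \<and> (s 1 \<le> s0 1 \<and> s0 1 < 2 * s 1 \<and>
              - 2 * (s0 1 - s 1) * sqrt (l 1) \<le> (sm 1 * x 0 + k 1) * sqrt (2 * s 1 - s0 1)
              \<longrightarrow> x 1 \<le> sqrt (l 1) / sqrt (2 * s 1 - s0 1))"
proof -
  have interior: "s0 n * (x n)\<^sup>2 + k n * x n \<le> l n" if "n \<ge> 2" for n
    using positive_solution_quadratic_le_interior[OF sol that] sp_nn sm_nn that by simp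
  have first: "s0 1 * (x 1)\<^sup>2 + (sm 1 * x 0 + k 1) * x 1 \<le> l 1"
    using positive_solution_quadratic_le[OF sol, of 1] sp_nn[of 1] by simp
  show ?thesis
  proof (intro conjI allI impI)
    fix n :: nat
    assume "n \<ge> 2"
    then show "x n \<le> (sqrt ((k n)\<^sup>2 + 4 * l n * s0 n) - k n) / (2 * s0 n)"
      using le_positive_root_of_quadratic_le[OF s0_pos interior] by simp
    show "(sqrt ((k n)\<^sup>2 + 4 * l n * s0 n) - k n) / (2 * s0 n)
            \<le> sqrt (l n / s0 n) + negpart (k n) / s0 n"
      using positive_root_le_sqrt_add_negpart[OF s0_pos l_pos] \<open>n \<ge> 2\<close> by simp
  next
    fix n :: nat
    assume "n \<ge> 2" and "s n \<le> s0 n \<and> s0 n < 2 * s n \<and>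
      - 2 * (s0 n - s n) * sqrt (l n) \<le> k n * sqrt (2 * s n - s0 n)"
    then show "x n \<le> sqrt (l n) / sqrt (2 * s n - s0 n)"
      using le_of_quadratic_le_of_coefficient_bound[OF s0_pos l_pos _ interior] by simp
  next
    assume "s 1 \<le> s0 1 \<and> s0 1 < 2 * s 1 \<and>
      - 2 * (s0 1 - s 1) * sqrt (l 1) \<le> (sm 1 * x 0 + k 1) * sqrt (2 * s 1 - s0 1)"
    then show "x 1 \<le> sqrt (l 1) / sqrt (2 * s 1 - s0 1)"
      using le_of_quadratic_le_of_coefficient_bound[OF s0_pos l_pos _ first] by simp
  qed
qed

end
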